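(* Let $k,\ell,n,p,s\in\mathbb{N}$, $W\subset\mathbb{R}^n$, and let $H:\mathbb{R}_{\ge0}\times\mathbb{R}^p\to\mathbb{R}^{s\times n}$ and $A:\mathbb{R}_{\ge0}\times\mathbb{R}^\ell\times\mathbb{R}^k\times\mathbb{R}^p\to\mathbb{R}^{n\times n}$ be continuous. Let $t\mapsto Q(t)\subset\mathbb{R}^\ell$ ($t\ge0$) be a set-valued map with $Q(t)\ne\emptyset$ for all $t$, satisfying the CP. For each $t_0\ge0$ let $\Omega(t_0,W)$ be a nonempty set of continuous functions $(u,y):[t_0,\infty)\to\mathbb{R}^p\times\mathbb{R}^k$ parameterized by $t_0$ and $x_0\in W$. Let $t_0\ge0$, $\tau>0$, $b>a\ge t_0+\tau$ with $b-a<\tau$, and $(u,y)\in\Omega(t_0,W)$. Assume there exist a symmetric positive definite $P\in C^1([a,b];\mathbb{R}^{n\times n})$ and $d\in C^0([a,b];\mathbb{R})$, both strongly causal on $[a,b]$ with respect to $\Omega(t_0,W)$, such that \[ e'P(t)A(t-\tau,q,y_\tau(t),u_\tau(t))e+\tfrac12e'\dot P(t)e\le-d(t)e'P(t)e\quad\forall t\in[a,b],\ e\in\ker H(t-\tau,u_\tau(t)),\ q\in Q(t-\tau), \] and $\operatorname{rank}H(t-\tau,u_\tau(t))<n$ for all $t\in[a,b]$. Then for every $\bar d\in C^0([a,b];\mathbb{R})$, strongly causal on $[a,b]$ with respect to $\Omega(t_0,W)$, with $\bar d(t)<d(t)$ for all $t\in[a,b]$, there exists $\phi\in C^1([a,b];\mathbb{R}_{>0})$,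 strongly causal on $[a,b]$ with respect to $\Omega(t_0,W)$, such that \[ e'P(t)A(t-\tau,q,y_\tau(t),u_\tau(t))e+\tfrac12e'\dot P(t)e\le\phi(t)|H(t-\tau,u_\tau(t))e|^2-\bar d(t)e'P(t)e\quad\forall t\in[a,b],\ e\in\mathbb{R}^n,\ q\in Q(t-\tau). \]
   Context: $g_\tau(t):=g(t-\tau)$ denotes the $\tau$-time shift. A set-valued map $t\mapsto Q(t)$ satisfies the Compactness Property (CP) if whenever $t_\nu\to t$ and $q_\nu\in Q(t_\nu)$, some subsequence $q_{\nu_k}$ converges to some $q\in Q(t)$. A map $t\mapsto a_{u,y}(t)$ defined for $(u,y)\in\Omega(t_0,W)$ and $t\in I$ is strongly causal on $I\cap[\alpha,\beta]$ ($\beta>\alpha\ge t_0$) with respect to $\Omega(t_0,W)$ if for every $t\in I\cap[\alpha,\beta]$ the value $a_{u,y}(t)$ depends only on the restriction $(u,y)|_{[t_0,\alpha)}$. *)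

theory Defs
  imports "HOL-Analysis.Analysis"
begin

definition CP :: "(real \<Rightarrow> 'a::metric_space set) \<Rightarrow> bool" where
  "CP Q \<longleftrightarrow> (\<forall>(tt::nat \<Rightarrow> real) t (qq::nat \<Rightarrow> 'a).
      t \<ge> 0 \<and> (\<forall>i. tt i \<ge> 0) \<and> tt \<longlonglongrightarrow> t \<and> (\<forall>i. qq i \<in> Q (tt i)) \<longrightarrow>
      (\<exists>r q. strict_mono r \<and> q \<in> Q t \<and> (qq \<circ> r) \<longlonglongrightarrow> q))"

definition strongly_causal ::
  "((real \<Rightarrow> 'p) \<times> (real \<Rightarrow> 'k)) set \<Rightarrow> real \<Rightarrow> real \<Rightarrow> real \<Rightarrow>
   ((real \<Rightarrow> 'p) \<times> (real \<Rightarrow> 'k) \<Rightarrow> real \<Rightarrow> 'b) \<Rightarrow> bool" where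
  "strongly_causal Om t0 \<alpha> \<beta> f \<longleftrightarrow>
     (\<forall>uy1\<in>Om. \<forall>uy2\<in>Om.
        (\<forall>s\<in>{t0..<\<alpha>}. fst uy1 s = fst uy2 s \<and> snd uy1 s = snd uy2 s) \<longrightarrow>
        (\<forall>t\<in>{\<alpha>..\<beta>}. f uy1 t = f uy2 t))"

text \<open>C^1 on a compact interval (one-sided derivatives at the endpoints).\<close>
definition C1_on :: "real \<Rightarrow> real \<Rightarrow> (real \<Rightarrow> 'a::real_normed_vector) \<Rightarrow> bool" where
  "C1_on a b f \<longleftrightarrow> (\<forall>t\<in>{a..b}. f differentiable (at t within {a..b})) \<and>
     continuous_on {a..b} (\<lambda>t. vector_derivative f (at t within {a..b}))"

definition sym_pos_def_mat :: "real^'n^'n \<Rightarrow> bool" where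
  "sym_pos_def_mat M \<longleftrightarrow> transpose M = M \<and> (\<forall>e. e \<noteq> 0 \<longrightarrow> e \<bullet> (M *v e) > 0)"

end

theory Submission
  imports Defs
begin

text \<open>The pairs (t, q) with t in [a, b] and q in Q(t - \<tau>) form a compact set, by the CP.
  Over it, the quadratic form of P A + P'/2 + dbar P is negative on ker H minus 0, because
  dbar < d and P is positive definite. A uniform Finsler lemma then dominates the form by
  C |H e|^2 with a single constant C: on unit vectors, compare the maximum of the form with the
  positive minimum of |H e|^2 over the compact set where the form is nonnegative, and extend by
  homogeneity. The constant multiplier \<phi> = C is trivially C^1, positive and strongly causal.\<close>

lemma continuous_on_matrix_vector_mult [continuous_intros]:
  fixes f :: "'a::topological_space \<Rightarrow> real^'n^'m"
  assumes "continuous_on S f" "continuous_on S g"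
  shows "continuous_on S (\<lambda>x. f x *v g x)"
  unfolding matrix_vector_mult_def by (intro continuous_intros assms)

lemma continuous_on_matrix_matrix_mult [continuous_intros]:
  fixes f :: "'a::topological_space \<Rightarrow> real^'n^'m"
  assumes "continuous_on S f" "continuous_on S g"
  shows "continuous_on S (\<lambda>x. f x ** g x)"
  unfolding matrix_matrix_mult_def by (intro continuous_intros assms)

lemma C1_on_imp_continuous_on: "C1_on a b f \<Longrightarrow> continuous_on {a..b} f"
  unfolding C1_on_def continuous_on_eq_continuous_within
  using differentiable_imp_continuous_within by blast

lemma C1_on_const:
  fixes c :: "'a::euclidean_space"
  assumes "a < b"
  shows "C1_on a b (\<lambda>_. c)"
proof -
  have "vector_derivative (\<lambda>_. c) (at t within {a..b}) = 0" if "t \<in> {a..b}" for t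
    by (rule vector_derivative_within_closed_interval[OF assms that has_vector_derivative_const])
  then show ?thesis
    unfolding C1_on_def by (auto intro: continuous_on_eq[OF continuous_on_const])
qed

lemma compact_Sigma_shifted_CP:
  fixes Q :: "real \<Rightarrow> 'a::metric_space set"
  assumes "CP Q" "compact S" "\<And>t. t \<in> S \<Longrightarrow> c \<le> t"
  shows "compact (SIGMA t:S. Q (t - c))"
  unfolding compact_eq_seq_compact_metric
proof (rule seq_compactI)
  fix f :: "nat \<Rightarrow> real \<times> 'a"
  assume f: "\<forall>n. f n \<in> (SIGMA t:S. Q (t - c))"
  then have fS: "fst (f n) \<in> S" and fQ: "snd (f n) \<in> Q (fst (f n) - c)" for n
    by (metis mem_Sigma_iff prod.collapse)+
  then obtain t r1 where t: "t \<in> S" and r1: "strict_mono r1" and lim1: "(fst \<circ> f \<circ> r1) \<longlonglongrightarrow> t"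
    using seq_compactE[OF \<open>compact S\<close>[unfolded compact_eq_seq_compact_metric], of "fst \<circ> f"]
    by (metis comp_apply)
  have "(\<lambda>i. fst (f (r1 i)) - c) \<longlonglongrightarrow> t - c"
    using lim1 by (intro tendsto_diff tendsto_const) (simp add: o_def)
  moreover have "\<forall>i. snd (f (r1 i)) \<in> Q (fst (f (r1 i)) - c)" "\<forall>i. 0 \<le> fst (f (r1 i)) - c"
    using fS fQ assms(3) by (auto simp: algebra_simps)
  ultimately obtain r2 q where r2: "strict_mono r2" and q: "q \<in> Q (t - c)"
      and lim2: "(snd \<circ> f \<circ> r1 \<circ> r2) \<longlonglongrightarrow> q"
    using \<open>CP Q\<close> assms(3)[OF t] unfolding CP_def
    by (elim allE[of _ "\<lambda>i. fst (f (r1 i)) - c"] allE[of _ "t - c"] allE[of _ "snd \<circ> f \<circ> r1"])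
       (auto simp: o_def)
  have "(f \<circ> (r1 \<circ> r2)) \<longlonglongrightarrow> (t, q)"
    using tendsto_Pair[OF LIMSEQ_subseq_LIMSEQ[OF lim1 r2] lim2]
    by (simp add: o_def)
  then show "\<exists>l\<in>(SIGMA t:S. Q (t - c)). \<exists>r. strict_mono r \<and> (f \<circ> r) \<longlonglongrightarrow> l"
    using t q r1 r2 strict_mono_o by blast
qed

lemma continuous_on_delayed_coefficients:
  fixes H :: "real \<Rightarrow> 'p::topological_space \<Rightarrow> 'h::topological_space"
    and A :: "real \<Rightarrow> 'l::topological_space \<Rightarrow> 'k::topological_space \<Rightarrow> 'p \<Rightarrow> 'a::topological_space"
  assumes H_cont: "continuous_on ({0..} \<times> UNIV) (\<lambda>(t, v). H t v)"
    and A_cont: "continuous_on ({0..} \<times> UNIV \<times> UNIV \<times> UNIV) (\<lambda>(t, q, w, v). A t q w v)"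
    and u: "continuous_on {t0..} u" and y: "continuous_on {t0..} y"
    and "0 \<le> t0" and S: "S \<subseteq> {t0 + \<tau>..}"
  shows "continuous_on (SIGMA t:S. Q t) (\<lambda>x. A (fst x - \<tau>) (snd x) (y (fst x - \<tau>)) (u (fst x - \<tau>)))"
    and "continuous_on S (\<lambda>t. H (t - \<tau>) (u (t - \<tau>)))"
proof -
  let ?K = "SIGMA t:S. Q t"
  have delay_K: "continuous_on ?K (\<lambda>x. fst x - \<tau>)" "(\<lambda>x. fst x - \<tau>) ` ?K \<subseteq> {t0..}"
    using S by (auto intro!: continuous_intros)
  have delay_S: "continuous_on S (\<lambda>t. t - \<tau>)" "(\<lambda>t. t - \<tau>) ` S \<subseteq> {t0..}"
    using S by (auto intro!: continuous_intros)
  have "continuous_on ?K (\<lambda>x. u (fst x - \<tau>))" "continuous_on ?K (\<lambda>x. y (fst x - \<tau>))"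
    using continuous_on_compose2[OF _ delay_K] u y by blast+
  then have "continuous_on ?K
      (\<lambda>x. (\<lambda>(t, q, w, v). A t q w v) (fst x - \<tau>, snd x, y (fst x - \<tau>), u (fst x - \<tau>)))"
    using delay_K \<open>0 \<le> t0\<close> by (intro continuous_on_compose2[OF A_cont] continuous_intros) force+
  then show "continuous_on ?K (\<lambda>x. A (fst x - \<tau>) (snd x) (y (fst x - \<tau>)) (u (fst x - \<tau>)))"
    by simp
  have "continuous_on S (\<lambda>t. u (t - \<tau>))"
    using continuous_on_compose2[OF u delay_S] .
  then have "continuous_on S (\<lambda>t. (\<lambda>(t, v). H t v) (t - \<tau>, u (t - \<tau>)))"
    using delay_S \<open>0 \<le> t0\<close> by (intro continuous_on_compose2[OF H_cont] continuous_intros) force+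
  then show "continuous_on S (\<lambda>t. H (t - \<tau>) (u (t - \<tau>)))"
    by simp
qed

lemma compact_multiplier_bound:
  fixes F G :: "'a::t2_space \<Rightarrow> real"
  assumes X: "compact X" and F: "continuous_on X F" and G: "continuous_on X G"
    and G_nonneg: "\<And>x. x \<in> X \<Longrightarrow> 0 \<le> G x"
    and F_neg: "\<And>x. x \<in> X \<Longrightarrow> G x = 0 \<Longrightarrow> F x < 0"
  obtains C where "C > 0" "\<And>x. x \<in> X \<Longrightarrow> F x \<le> C * G x"
proof -
  define K where "K = X \<inter> F -` {0..}"
  have "closed K"
    unfolding K_def by (rule continuous_closed_preimage[OF F compact_imp_closed[OF X] closed_atLeast])
  then have K: "compact K"
    using compact_Int_closed[OF X] unfolding K_def by (metis Int_assoc Int_absorb)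
  show thesis
  proof (cases "K = {}")
    case True
    then have "F x \<le> 1 * G x" if "x \<in> X" for x
      using G_nonneg[OF that] that unfolding K_def by fastforce
    then show thesis using that[of 1] by simp
  next
    case False
    obtain xM where xM: "xM \<in> K" "\<And>x. x \<in> K \<Longrightarrow> F x \<le> F xM"
      using continuous_attains_sup[OF K False, of F] continuous_on_subset[OF F] K_def by blast
    obtain xm where xm: "xm \<in> K" "\<And>x. x \<in> K \<Longrightarrow> G xm \<le> G x"
      using continuous_attains_inf[OF K False, of G] continuous_on_subset[OF G] K_def by blast
    have Gxm: "0 < G xm"
      using xm(1) G_nonneg F_neg unfolding K_def by force
    define C where "C = max 1 (F xM / G xm)"
    have "F x \<le> C * G x" if "x \<in> X" for x
    proof (cases "x \<in> K")
      case True
      have "F x \<le> F xM / G xm * G xm" using xM(2)[OF True] Gxm by simp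
      also have "\<dots> \<le> C * G x"
        using xm(2)[OF True] Gxm unfolding C_def by (intro mult_mono) auto
      finally show ?thesis .
    next
      case False
      then have "F x < 0" using that unfolding K_def by auto
      moreover have "0 \<le> C * G x" using G_nonneg[OF that] unfolding C_def by simp
      ultimately show ?thesis by linarith
    qed
    then show thesis using that[of C] unfolding C_def by simp
  qed
qed

lemma homogeneous2_le_from_sphere:
  fixes f g :: "'a::real_normed_vector \<Rightarrow> real"
  assumes f: "\<And>c x. f (c *\<^sub>R x) = c^2 * f x" and g: "\<And>c x. g (c *\<^sub>R x) = c^2 * g x"
    and sphere: "\<And>x. norm x = 1 \<Longrightarrow> f x \<le> g x"
  shows "f x \<le> g x"
proof (cases "x = 0")
  case True
  then show ?thesis using f[of 0 0] g[of 0 0] by simp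
next
  case False
  then have x: "x = norm x *\<^sub>R sgn x" by (simp add: sgn_div_norm)
  have "f x = (norm x)^2 * f (sgn x)" by (subst x) (rule f)
  moreover have "g x = (norm x)^2 * g (sgn x)" by (subst x) (rule g)
  ultimately show ?thesis using sphere[of "sgn x"] False by (simp add: norm_sgn mult_left_mono)
qed

lemma uniform_Finsler_on_compact:
  fixes M :: "'a::t2_space \<Rightarrow> real^'n^'n" and N :: "'a \<Rightarrow> real^'n^'m"
  assumes K: "compact K" and M: "continuous_on K M" and N: "continuous_on K N"
    and neg: "\<And>x e. x \<in> K \<Longrightarrow> e \<noteq> 0 \<Longrightarrow> N x *v e = 0 \<Longrightarrow> e \<bullet> (M x *v e) < 0"
  obtains C where "C > 0" "\<And>x e. x \<in> K \<Longrightarrow> e \<bullet> (M x *v e) \<le> C * (norm (N x *v e))^2"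
proof -
  let ?S = "K \<times> sphere (0::real^'n) 1"
  obtain C where C: "C > 0"
    and on_sphere: "\<And>z. z \<in> ?S \<Longrightarrow> snd z \<bullet> (M (fst z) *v snd z) \<le> C * (norm (N (fst z) *v snd z))^2"
  proof (rule compact_multiplier_bound)
    show "compact ?S" using K by (intro compact_Times compact_sphere)
    have "continuous_on ?S (\<lambda>z. M (fst z))" "continuous_on ?S (\<lambda>z. N (fst z))"
      by (auto intro!: continuous_on_compose2[OF M] continuous_on_compose2[OF N] continuous_intros)
    then show "continuous_on ?S (\<lambda>z. snd z \<bullet> (M (fst z) *v snd z))"
      "continuous_on ?S (\<lambda>z. (norm (N (fst z) *v snd z))^2)"
      by (auto intro!: continuous_intros)
  next
    fix z assume "z \<in> ?S" "(norm (N (fst z) *v snd z))^2 = 0"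
    then have "fst z \<in> K" "snd z \<noteq> 0" "N (fst z) *v snd z = 0"
      by (auto simp: mem_Times_iff)
    then show "snd z \<bullet> (M (fst z) *v snd z) < 0" by (rule neg)
  qed auto
  have "e \<bullet> (M x *v e) \<le> C * (norm (N x *v e))^2" if "x \<in> K" for x e
  proof (rule homogeneous2_le_from_sphere[where f = "\<lambda>e. e \<bullet> (M x *v e)"
        and g = "\<lambda>e. C * (norm (N x *v e))^2"])
    show "(c *\<^sub>R e) \<bullet> (M x *v (c *\<^sub>R e)) = c^2 * (e \<bullet> (M x *v e))" for c e
      by (simp add: matrix_vector_mult_scaleR power2_eq_square)
    show "C * (norm (N x *v (c *\<^sub>R e)))^2 = c^2 * (C * (norm (N x *v e))^2)" for c e
      by (simp add: matrix_vector_mult_scaleR power_mult_distrib)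
    show "e \<bullet> (M x *v e) \<le> C * (norm (N x *v e))^2" if "norm e = 1" for e
      using on_sphere[of "(x, e)"] \<open>x \<in> K\<close> that by simp
  qed
  with C that show thesis by blast
qed

lemma Finsler_bound_on_compact_graph:
  fixes P DP :: "real \<Rightarrow> real^'n^'n" and A :: "real \<Rightarrow> 'a::t2_space \<Rightarrow> real^'n^'n"
    and H :: "real \<Rightarrow> real^'n^'m" and d dbar :: "real \<Rightarrow> real"
  assumes K: "compact (SIGMA t:{a..b}. Q t)"
    and P: "continuous_on {a..b} P" and DP: "continuous_on {a..b} DP"
    and H: "continuous_on {a..b} H" and dbar: "continuous_on {a..b} dbar"
    and A: "continuous_on (SIGMA t:{a..b}. Q t) (\<lambda>x. A (fst x) (snd x))"
    and P_spd: "\<And>t. t \<in> {a..b} \<Longrightarrow> sym_pos_def_mat (P t)"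
    and ineq: "\<And>t e q. t \<in> {a..b} \<Longrightarrow> H t *v e = 0 \<Longrightarrow> q \<in> Q t \<Longrightarrow>
        e \<bullet> (P t *v (A t q *v e)) + 1/2 * (e \<bullet> (DP t *v e)) \<le> - d t * (e \<bullet> (P t *v e))"
    and dbar_lt: "\<And>t. t \<in> {a..b} \<Longrightarrow> dbar t < d t"
  obtains C where "C > 0" and "\<And>t q e. t \<in> {a..b} \<Longrightarrow> q \<in> Q t \<Longrightarrow>
    e \<bullet> (P t *v (A t q *v e)) + 1/2 * (e \<bullet> (DP t *v e))
      \<le> C * (norm (H t *v e))^2 - dbar t * (e \<bullet> (P t *v e))"
proof -
  let ?K = "SIGMA t:{a..b}. Q t"
  define M where "M = (\<lambda>x. P (fst x) ** A (fst x) (snd x) + (1/2) *\<^sub>R DP (fst x)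
      + dbar (fst x) *\<^sub>R P (fst x))"
  have form: "e \<bullet> (M (t, q) *v e) = e \<bullet> (P t *v (A t q *v e)) + 1/2 * (e \<bullet> (DP t *v e))
      + dbar t * (e \<bullet> (P t *v e))" for t q e
    by (simp add: M_def matrix_vector_mult_add_rdistrib matrix_vector_mul_assoc
        scaleR_matrix_vector_assoc[symmetric] inner_add_right)
  have fst_K: "continuous_on ?K fst" "fst ` ?K \<subseteq> {a..b}"
    by (auto intro!: continuous_intros)
  have "continuous_on ?K (\<lambda>x. P (fst x))" "continuous_on ?K (\<lambda>x. DP (fst x))"
    "continuous_on ?K (\<lambda>x. H (fst x))" "continuous_on ?K (\<lambda>x. dbar (fst x))"
    using continuous_on_compose2[OF _ fst_K] P DP H dbar by blast+
  then have "continuous_on ?K M" "continuous_on ?K (\<lambda>x. H (fst x))"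
    unfolding M_def using A by (auto intro!: continuous_intros)
  moreover have "e \<bullet> (M x *v e) < 0" if "x \<in> ?K" "e \<noteq> 0" "H (fst x) *v e = 0" for x e
  proof -
    obtain t q where x: "x = (t, q)" "t \<in> {a..b}" "q \<in> Q t"
      using \<open>x \<in> ?K\<close> by auto
    have "0 < e \<bullet> (P t *v e)"
      using P_spd[OF \<open>t \<in> {a..b}\<close>] \<open>e \<noteq> 0\<close> unfolding sym_pos_def_mat_def by blast
    then have "dbar t * (e \<bullet> (P t *v e)) < d t * (e \<bullet> (P t *v e))"
      using dbar_lt[OF \<open>t \<in> {a..b}\<close>] by (rule mult_strict_right_mono[rotated])
    then show ?thesis
      using ineq[OF \<open>t \<in> {a..b}\<close> _ \<open>q \<in> Q t\<close>, of e] \<open>H (fst x) *v e = 0\<close>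
      unfolding form x(1) by simp
  qed
  ultimately obtain C where "C > 0"
    and C: "\<And>x e. x \<in> ?K \<Longrightarrow> e \<bullet> (M x *v e) \<le> C * (norm (H (fst x) *v e))^2"
    by (rule uniform_Finsler_on_compact[OF K]) blast+
  show thesis
  proof (rule that[OF \<open>C > 0\<close>])
    fix t q e assume "t \<in> {a..b}" "q \<in> Q t"
    then show "e \<bullet> (P t *v (A t q *v e)) + 1/2 * (e \<bullet> (DP t *v e))
        \<le> C * (norm (H t *v e))^2 - dbar t * (e \<bullet> (P t *v e))"
      using C[of "(t, q)" e] unfolding form by simp
  qed
qed

theorem lemma3p4:
  fixes H :: "real \<Rightarrow> real^'p \<Rightarrow> real^'n^'s"
    and A :: "real \<Rightarrow> real^'l \<Rightarrow> real^'k \<Rightarrow> real^'p \<Rightarrow> real^'n^'n"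
    and Q :: "real \<Rightarrow> (real^'l) set"
    and Om :: "((real \<Rightarrow> real^'p) \<times> (real \<Rightarrow> real^'k)) set"
    and t0 \<tau> a b :: real
    and u :: "real \<Rightarrow> real^'p" and y :: "real \<Rightarrow> real^'k"
    and P :: "(real \<Rightarrow> real^'p) \<times> (real \<Rightarrow> real^'k) \<Rightarrow> real \<Rightarrow> real^'n^'n"
    and d :: "(real \<Rightarrow> real^'p) \<times> (real \<Rightarrow> real^'k) \<Rightarrow> real \<Rightarrow> real"
  assumes H_cont: "continuous_on ({0..} \<times> UNIV) (\<lambda>(t, v). H t v)"
    and A_cont: "continuous_on ({0..} \<times> UNIV \<times> UNIV \<times> UNIV) (\<lambda>(t, q, w, v). A t q w v)"
    and Q_ne: "\<And>t. t \<ge> 0 \<Longrightarrow> Q t \<noteq> {}"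
    and Q_CP: "CP Q"
    and Om_ne: "Om \<noteq> {}"
    and Om_cont: "\<And>u' y'. (u', y') \<in> Om \<Longrightarrow> continuous_on {t0..} u' \<and> continuous_on {t0..} y'"
    and t0: "t0 \<ge> 0" and tau: "\<tau> > 0"
    and ab: "a \<ge> t0 + \<tau>" "b > a" "b - a < \<tau>"
    and uy: "(u, y) \<in> Om"
    and P_C1: "\<And>uy'. uy' \<in> Om \<Longrightarrow> C1_on a b (P uy')"
    and P_spd: "\<And>uy' t. uy' \<in> Om \<Longrightarrow> t \<in> {a..b} \<Longrightarrow> sym_pos_def_mat (P uy' t)"
    and P_causal: "strongly_causal Om t0 a b P"
    and d_cont: "\<And>uy'. uy' \<in> Om \<Longrightarrow> continuous_on {a..b} (d uy')"
    and d_causal: "strongly_causal Om t0 a b d"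
    and ineq: "\<And>t e q. t \<in> {a..b} \<Longrightarrow> H (t - \<tau>) (u (t - \<tau>)) *v e = 0 \<Longrightarrow> q \<in> Q (t - \<tau>) \<Longrightarrow>
        e \<bullet> (P (u, y) t *v (A (t - \<tau>) q (y (t - \<tau>)) (u (t - \<tau>)) *v e))
        + 1/2 * (e \<bullet> (vector_derivative (P (u, y)) (at t within {a..b}) *v e))
        \<le> - d (u, y) t * (e \<bullet> (P (u, y) t *v e))"
    and rank_H: "\<And>t. t \<in> {a..b} \<Longrightarrow> rank (H (t - \<tau>) (u (t - \<tau>))) < CARD('n)"
  shows "\<forall>dbar :: (real \<Rightarrow> real^'p) \<times> (real \<Rightarrow> real^'k) \<Rightarrow> real \<Rightarrow> real.
     (\<forall>uy'\<in>Om. continuous_on {a..b} (dbar uy')) \<and> strongly_causal Om t0 a b dbar \<and>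
     (\<forall>uy'\<in>Om. \<forall>t\<in>{a..b}. dbar uy' t < d uy' t) \<longrightarrow>
     (\<exists>\<phi> :: (real \<Rightarrow> real^'p) \<times> (real \<Rightarrow> real^'k) \<Rightarrow> real \<Rightarrow> real.
        (\<forall>uy'\<in>Om. C1_on a b (\<phi> uy') \<and> (\<forall>t\<in>{a..b}. \<phi> uy' t > 0)) \<and>
        strongly_causal Om t0 a b \<phi> \<and>
        (\<forall>t\<in>{a..b}. \<forall>e. \<forall>q\<in>Q (t - \<tau>).
          e \<bullet> (P (u, y) t *v (A (t - \<tau>) q (y (t - \<tau>)) (u (t - \<tau>)) *v e))
          + 1/2 * (e \<bullet> (vector_derivative (P (u, y)) (at t within {a..b}) *v e))
          \<le> \<phi> (u, y) t * (norm (H (t - \<tau>) (u (t - \<tau>)) *v e))^2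
             - dbar (u, y) t * (e \<bullet> (P (u, y) t *v e))))"
proof (intro allI impI)
  fix dbar :: "(real \<Rightarrow> real^'p) \<times> (real \<Rightarrow> real^'k) \<Rightarrow> real \<Rightarrow> real"
  assume "(\<forall>uy'\<in>Om. continuous_on {a..b} (dbar uy')) \<and> strongly_causal Om t0 a b dbar \<and>
     (\<forall>uy'\<in>Om. \<forall>t\<in>{a..b}. dbar uy' t < d uy' t)"
  then have dbar: "continuous_on {a..b} (dbar (u, y))" "\<And>t. t \<in> {a..b} \<Longrightarrow> dbar (u, y) t < d (u, y) t"
    using uy by auto
  have graph: "compact (SIGMA t:{a..b}. Q (t - \<tau>))"
    using ab t0 by (intro compact_Sigma_shifted_CP[OF Q_CP]) auto
  have P: "continuous_on {a..b} (P (u, y))"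
    "continuous_on {a..b} (\<lambda>t. vector_derivative (P (u, y)) (at t within {a..b}))"
    using P_C1[OF uy] C1_on_imp_continuous_on unfolding C1_on_def by blast+
  have "continuous_on {t0..} u" "continuous_on {t0..} y" "{a..b} \<subseteq> {t0 + \<tau>..}"
    using Om_cont[OF uy] ab by auto
  note delayed = continuous_on_delayed_coefficients[OF H_cont A_cont this(1,2) t0 this(3)]
  obtain C where "C > 0" and C: "\<And>t q e. t \<in> {a..b} \<Longrightarrow> q \<in> Q (t - \<tau>) \<Longrightarrow>
      e \<bullet> (P (u, y) t *v (A (t - \<tau>) q (y (t - \<tau>)) (u (t - \<tau>)) *v e))
      + 1/2 * (e \<bullet> (vector_derivative (P (u, y)) (at t within {a..b}) *v e))
      \<le> C * (norm (H (t - \<tau>) (u (t - \<tau>)) *v e))^2 - dbar (u, y) t * (e \<bullet> (P (u, y) t *v e))"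
    by (rule Finsler_bound_on_compact_graph[OF graph P delayed(2) dbar(1) delayed(1)
          P_spd[OF uy] ineq dbar(2)]) blast+
  show "\<exists>\<phi>. (\<forall>uy'\<in>Om. C1_on a b (\<phi> uy') \<and> (\<forall>t\<in>{a..b}. \<phi> uy' t > 0)) \<and>
        strongly_causal Om t0 a b \<phi> \<and>
        (\<forall>t\<in>{a..b}. \<forall>e. \<forall>q\<in>Q (t - \<tau>).
          e \<bullet> (P (u, y) t *v (A (t - \<tau>) q (y (t - \<tau>)) (u (t - \<tau>)) *v e))
          + 1/2 * (e \<bullet> (vector_derivative (P (u, y)) (at t within {a..b}) *v e))
          \<le> \<phi> (u, y) t * (norm (H (t - \<tau>) (u (t - \<tau>)) *v e))^2
             - dbar (u, y) t * (e \<bullet> (P (u, y) t *v e)))"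
    using C1_on_const[OF \<open>a < b\<close>] \<open>C > 0\<close> C
    by (intro exI[of _ "\<lambda>_ _. C"]) (auto simp: strongly_causal_def)
qed

end
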